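(* Let $H$ be a finite graph with edges $e_1,\dots,e_m$. For each edge $e_i$ let $\theta_{e_i}\colon\{0,1\}^m\to\{0,1\}^m$ be the map flipping the $i$-th coordinate and fixing all others. Let $H'$ be the graph with vertex set $V(H)\times\{0,1\}^m$ and edge set $\{\{(u,\mathbf x),(v,\theta_{uv}(\mathbf x))\}: uv\in E(H),\ \mathbf x\in\{0,1\}^m\}$. If $H$ contains a cycle, then the girth of $H'$ is at least twice the girth of $H$.
   Context: The girth of a graph is the length of its shortest cycle (infinite if the graph is acyclic). *)

theory Defs
  imports Main "HOL-Library.Extended_Nat"
begin

definition finite_simple_graph :: "'v set \<Rightarrow> 'v set set \<Rightarrow> bool" where
  "finite_simple_graph V E \<longleftrightarrow> finite V \<and>
     (\<forall>e\<in>E. \<exists>u v. u \<noteq> v \<and> u \<in> V \<and> v \<in> V \<and> e = {u, v})"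

definition is_cycle :: "'v set \<Rightarrow> 'v set set \<Rightarrow> 'v list \<Rightarrow> bool" where
  "is_cycle V E cs \<longleftrightarrow> length cs \<ge> 3 \<and> distinct cs \<and> set cs \<subseteq> V \<and>
     (\<forall>i < length cs. {cs ! i, cs ! ((i + 1) mod length cs)} \<in> E)"

text \<open>Girth: length of a shortest cycle; infinite (top of enat) if there is no cycle.\<close>
definition girth :: "'v set \<Rightarrow> 'v set set \<Rightarrow> enat" where
  "girth V E = (INF cs \<in> {cs. is_cycle V E cs}. enat (length cs))"

definition flip :: "nat \<Rightarrow> bool list \<Rightarrow> bool list" where
  "flip i x = x[i := \<not> x ! i]"

text \<open>The graph H': edges of H are enumerated by the distinct list es (e_1..e_m).\<close>
definition cover_vertices :: "'v set \<Rightarrow> 'v set list \<Rightarrow> ('v \<times> bool list) set" where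
  "cover_vertices V es = V \<times> {x. length x = length es}"

definition cover_edges :: "'v set list \<Rightarrow> ('v \<times> bool list) set set" where
  "cover_edges es = {{(u, x), (v, flip i x)} | u v x i.
      i < length es \<and> es ! i = {u, v} \<and> length x = length es}"

end

theory Submission
  imports Defs
begin

text \<open>A cycle of length L in the cover projects to a closed walk of length L in the base
  graph that never immediately backtracks, since crossing the same edge twice in a row would
  return to the same vertex of the cover. The coordinate of an edge is flipped once per
  traversal of that edge and the walk is closed, so every edge of the walk is traversed an even
  number of times and the walk uses at most L/2 distinct edges. On the other hand, a shortest
  subwalk returning to a vertex is a cycle of the base graph whose edges are distinct, hence
  the girth of the base graph is at most L/2.\<close>

lemma length_flip [simp]: "length (flip i x) = length x"
  by (simp add: flip_def)

lemma flip_flip [simp]: "flip i (flip i x) = x"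
  by (cases "i < length x") (simp_all add: flip_def list_update_beyond)

lemma nth_flip: "i < length x \<Longrightarrow> flip i x ! k = (if k = i then \<not> x ! i else x ! k)"
  by (simp add: flip_def nth_list_update)

lemma nth_iterated_flip:
  assumes step: "\<And>j. x (Suc j) = flip (f j) (x j)" and i: "i < length (x 0)"
  shows "x k ! i = (x 0 ! i \<noteq> odd (card {j. j < k \<and> f j = i}))"
proof (induction k)
  case 0
  show ?case by simp
next
  case (Suc k)
  have len: "length (x k) = length (x 0)"
    using step by (induction k) simp_all
  show ?case
  proof (cases "f k = i")
    case True
    then have "{j. j < Suc k \<and> f j = i} = insert k {j. j < k \<and> f j = i}"
      by auto
    then show ?thesis
      using Suc True step[of k] len i by (simp add: nth_flip)
  next
    case False
    then have "{j. j < Suc k \<and> f j = i} = {j. j < k \<and> f j = i}"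
      using less_Suc_eq by auto
    then show ?thesis
      using Suc False step[of k] by (simp add: flip_def)
  qed
qed

lemma even_card_periodic_flips:
  assumes "\<And>j. x (Suc j) = flip (f j) (x j)" and "x L = x 0" and "i < length (x 0)"
  shows "even (card {j. j < L \<and> f j = i})"
  using nth_iterated_flip[OF assms(1,3), of L] assms(2) by (cases "x 0 ! i") auto

lemma card_image_le_half_if_even_fibres:
  assumes "finite A" and even: "\<And>y. y \<in> f ` A \<Longrightarrow> even (card {a \<in> A. f a = y})"
  shows "2 * card (f ` A) \<le> card A"
proof -
  have "2 * card (f ` A) = (\<Sum>y\<in>f ` A. 2)"
    by simp
  also have "\<dots> \<le> (\<Sum>y\<in>f ` A. card {a \<in> A. f a = y})"
  proof (rule sum_mono)
    fix y assume y: "y \<in> f ` A"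
    then have "card {a \<in> A. f a = y} \<noteq> 0"
      using \<open>finite A\<close> by auto
    with even[OF y] show "2 \<le> card {a \<in> A. f a = y}"
      by presburger
  qed
  also have "\<dots> = card A"
    using sum.image_gen[OF \<open>finite A\<close>, of "\<lambda>_. 1 :: nat" f] by simp
  finally show ?thesis .
qed

lemma girth_le_length: "is_cycle V E cs \<Longrightarrow> girth V E \<le> enat (length cs)"
  unfolding girth_def by (rule INF_lower) simp

lemma is_cycle_periodic_walk:
  assumes "is_cycle V E cs"
  defines "w \<equiv> \<lambda>j. cs ! (j mod length cs)"
  shows "w j \<in> V" and "{w j, w (Suc j)} \<in> E" and "w j \<noteq> w (Suc (Suc j))"
    and "w (length cs) = w 0"
proof -
  define L where "L = length cs"
  have L: "L \<ge> 3" and dist: "distinct cs"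
    using assms(1) by (simp_all add: is_cycle_def L_def)
  have lt: "k mod L < L" for k
    using L by simp
  show "w j \<in> V"
    using assms(1) lt[of j] by (auto simp: is_cycle_def w_def L_def)
  have "(j mod L + 1) mod L = Suc j mod L"
    by (simp add: mod_Suc_eq)
  then show "{w j, w (Suc j)} \<in> E"
    using assms(1) lt[of j] by (auto simp: is_cycle_def w_def L_def)
  show "w j \<noteq> w (Suc (Suc j))"
  proof
    assume "w j = w (Suc (Suc j))"
    then have "j mod L = Suc (Suc j) mod L"
      using dist lt[of j] lt[of "Suc (Suc j)"] by (simp add: w_def L_def nth_eq_iff_index_eq)
    then have "L dvd 2"
      using mod_eq_dvd_iff_nat[of j "Suc (Suc j)" L] by simp
    with L show False
      by (auto dest: dvd_imp_le)
  qed
  show "w (length cs) = w 0"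
    by (simp add: w_def)
qed

lemma closed_walk_obtains_simple_segment:
  fixes w :: "nat \<Rightarrow> 'v"
  assumes "w L = w 0" and "0 < L"
  obtains a d where "0 < d" "a + d \<le> L" "w (a + d) = w a"
    "\<And>p q. p < q \<Longrightarrow> q < d \<Longrightarrow> w (a + p) \<noteq> w (a + q)"
proof -
  define P where "P d \<longleftrightarrow> 0 < d \<and> (\<exists>a. a + d \<le> L \<and> w (a + d) = w a)" for d
  have "P L"
    using assms by (auto simp: P_def intro: exI[of _ 0])
  then have "P (Least P)"
    by (rule LeastI)
  then obtain a where a: "0 < Least P" "a + Least P \<le> L" "w (a + Least P) = w a"
    unfolding P_def by blast
  moreover have "w (a + p) \<noteq> w (a + q)" if "p < q" "q < Least P" for p q
  proof
    assume "w (a + p) = w (a + q)"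
    then have "P (q - p)"
      using that a(2) by (auto simp: P_def intro!: exI[of _ "a + p"])
    then have "Least P \<le> q - p"
      by (rule Least_le)
    with that show False
      by simp
  qed
  ultimately show ?thesis
    using that by blast
qed

lemma closed_walk_obtains_cycle:
  fixes w :: "nat \<Rightarrow> 'v"
  assumes closed: "w L = w 0" "0 < L"
    and vertex: "\<And>j. w j \<in> V" and edge: "\<And>j. {w j, w (Suc j)} \<in> E"
    and no_loop: "\<And>j. w j \<noteq> w (Suc j)" and no_backtrack: "\<And>j. w j \<noteq> w (Suc (Suc j))"
  obtains a d where "a + d \<le> L" "is_cycle V E (map (\<lambda>p. w (a + p)) [0..<d])"
    "inj_on (\<lambda>p. {w (a + p), w (Suc (a + p))}) {..<d}"
proof -
  obtain a d where d: "0 < d" "a + d \<le> L" and return: "w (a + d) = w a"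
    and dist: "\<And>p q. p < q \<Longrightarrow> q < d \<Longrightarrow> w (a + p) \<noteq> w (a + q)"
    using closed_walk_obtains_simple_segment[OF closed] by metis
  have "d \<noteq> 1"
    using return no_loop[of a] by auto
  moreover have "d \<noteq> 2"
    using return no_backtrack[of a] by (auto simp: numeral_2_eq_2)
  ultimately have d3: "3 \<le> d"
    using d(1) by linarith
  define cs where "cs = map (\<lambda>p. w (a + p)) [0..<d]"
  have len: "length cs = d"
    by (simp add: cs_def)
  have cycle_edge: "{cs ! p, cs ! ((p + 1) mod d)} = {w (a + p), w (Suc (a + p))}" if "p < d" for p
  proof (cases "p + 1 < d")
    case True
    then show ?thesis
      using that by (simp add: cs_def)
  next
    case False
    with that have "p + 1 = d"
      by simp
    then have "w (Suc (a + p)) = w a" "(p + 1) mod d = 0"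
      using return by (metis add_Suc_right Suc_eq_plus1, simp)
    then show ?thesis
      using that d3 by (simp add: cs_def)
  qed
  have "is_cycle V E cs"
    unfolding is_cycle_def
  proof (intro conjI allI impI)
    show "3 \<le> length cs"
      using d3 len by simp
    show "distinct cs"
      unfolding cs_def distinct_conv_nth using dist by (auto simp: nat_neq_iff) (metis dist)
    show "set cs \<subseteq> V"
      using vertex by (auto simp: cs_def)
    fix p assume "p < length cs"
    then show "{cs ! p, cs ! ((p + 1) mod length cs)} \<in> E"
      using cycle_edge edge len by simp
  qed
  moreover have "inj_on (\<lambda>p. {w (a + p), w (Suc (a + p))}) {..<d}"
  proof (rule inj_onI, rule ccontr)
    fix p q assume "p \<in> {..<d}" "q \<in> {..<d}" "p \<noteq> q"
      and same: "{w (a + p), w (Suc (a + p))} = {w (a + q), w (Suc (a + q))}"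
    then have swapped: "w (a + p) = w (Suc (a + q))" "w (Suc (a + p)) = w (a + q)"
      using dist[of p q] dist[of q p] by (auto simp: doubleton_eq_iff nat_neq_iff)
    consider "q = Suc p" | "p = Suc q" | "Suc p < q" | "Suc q < p"
      using \<open>p \<noteq> q\<close> by linarith
    then show False
    proof cases
      case 1
      then show False
        using swapped(1) no_backtrack[of "a + p"] by simp
    next
      case 2
      then show False
        using swapped(2) no_backtrack[of "a + q"] by simp
    next
      case 3
      then show False
        using swapped(2) dist[of "Suc p" q] \<open>q \<in> {..<d}\<close> by simp
    next
      case 4
      then show False
        using swapped(1) dist[of "Suc q" p] \<open>p \<in> {..<d}\<close> by simp
    qed
  qed
  ultimately show ?thesis
    using that d(2) by (simp add: cs_def)
qed

lemma cover_edgeE: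
  assumes "{p, q} \<in> cover_edges es"
  obtains i where "i < length es" "es ! i = {fst p, fst q}" "length (snd p) = length es"
    "snd q = flip i (snd p)"
proof -
  from assms obtain u v x i where e: "{p, q} = {(u, x), (v, flip i x)}" "i < length es"
    "es ! i = {u, v}" "length x = length es"
    unfolding cover_edges_def by blast
  then consider "p = (u, x)" "q = (v, flip i x)" | "p = (v, flip i x)" "q = (u, x)"
    by (auto simp: doubleton_eq_iff)
  then show ?thesis
    by cases (use e that in \<open>auto simp: insert_commute\<close>)
qed

lemma cover_cycle_projection:
  assumes "distinct es"
    and cyc: "is_cycle (cover_vertices V es) (cover_edges es) cs"
  obtains w idx x where "\<And>j. w j \<in> V" "\<And>j. idx j < length es"
    "\<And>j. es ! idx j = {w j, w (Suc j)}" "\<And>j. w j \<noteq> w (Suc (Suc j))"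
    "\<And>j. x (Suc j) = flip (idx j) (x j)" "length (x 0) = length es"
    "w (length cs) = w 0" "x (length cs) = x 0"
proof -
  define n where "n j = cs ! (j mod length cs)" for j
  define w where "w j = fst (n j)" for j
  define x where "x j = snd (n j)" for j
  note walk = is_cycle_periodic_walk[OF cyc, folded n_def]
  have "\<forall>j. \<exists>i. i < length es \<and> es ! i = {w j, w (Suc j)} \<and> x (Suc j) = flip i (x j)"
    using walk(2) by (metis cover_edgeE w_def x_def)
  then obtain idx where idx: "\<And>j. idx j < length es" "\<And>j. es ! idx j = {w j, w (Suc j)}"
    and flips: "\<And>j. x (Suc j) = flip (idx j) (x j)"
    by metis
  have "w j \<noteq> w (Suc (Suc j))" for j
  proof
    assume backtrack: "w j = w (Suc (Suc j))"
    then have "es ! idx (Suc j) = es ! idx j"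
      using idx(2)[of j] idx(2)[of "Suc j"] by (simp add: insert_commute)
    then have "idx (Suc j) = idx j"
      using \<open>distinct es\<close> idx(1) by (simp add: nth_eq_iff_index_eq)
    then have "n (Suc (Suc j)) = n j"
      using backtrack flips[of j] flips[of "Suc j"] by (simp add: w_def x_def prod_eq_iff)
    with walk(3) show False
      by metis
  qed
  moreover have "w j \<in> V" "length (x j) = length es" for j
    using walk(1)[of j] by (auto simp: cover_vertices_def w_def x_def)
  ultimately show ?thesis
    using that[of w idx x] idx flips walk(4) by (simp add: w_def x_def)
qed

lemma twice_girth_le_cover_cycle_length:
  assumes simple: "finite_simple_graph V E" and "distinct es" and "set es = E"
    and cyc: "is_cycle (cover_vertices V es) (cover_edges es) cs"
  shows "2 * girth V E \<le> enat (length cs)"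
proof -
  define L where "L = length cs"
  have "0 < L"
    using cyc unfolding is_cycle_def L_def by linarith
  obtain w idx x where vertex: "\<And>j. w j \<in> V" and idx: "\<And>j. idx j < length es"
    and edge: "\<And>j. es ! idx j = {w j, w (Suc j)}" and no_backtrack: "\<And>j. w j \<noteq> w (Suc (Suc j))"
    and flips: "\<And>j. x (Suc j) = flip (idx j) (x j)" and len: "length (x 0) = length es"
    and closed: "w L = w 0" "x L = x 0"
    using cover_cycle_projection[OF \<open>distinct es\<close> cyc] unfolding L_def by metis
  have in_E: "{w j, w (Suc j)} \<in> E" for j
    using edge[of j] idx[of j] \<open>set es = E\<close> by (metis nth_mem)
  have no_loop: "w j \<noteq> w (Suc j)" for j
    using in_E[of j] simple by (auto simp: finite_simple_graph_def doubleton_eq_iff)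
  have half: "2 * card (idx ` {..<L}) \<le> L"
    using card_image_le_half_if_even_fibres[of "{..<L}" idx]
      even_card_periodic_flips[OF flips closed(2)] idx len by auto
  obtain a d where "a + d \<le> L" and short: "is_cycle V E (map (\<lambda>p. w (a + p)) [0..<d])"
    and inj: "inj_on (\<lambda>p. {w (a + p), w (Suc (a + p))}) {..<d}"
    using closed_walk_obtains_cycle[OF closed(1) \<open>0 < L\<close> vertex in_E no_loop no_backtrack] .
  have "inj_on (\<lambda>p. idx (a + p)) {..<d}"
    using inj edge by (metis (no_types, lifting) inj_on_def)
  then have "card {..<d} \<le> card (idx ` {..<L})"
    by (rule card_inj_on_le) (use \<open>a + d \<le> L\<close> in auto)
  with half have "2 * d \<le> L"
    by simp
  have "2 * girth V E \<le> 2 * enat d"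
    using girth_le_length[OF short] by (simp add: mult_left_mono)
  also have "\<dots> = enat (2 * d)"
    by (simp add: numeral_eq_enat)
  also have "\<dots> \<le> enat (length cs)"
    using \<open>2 * d \<le> L\<close> by (simp add: L_def)
  finally show ?thesis .
qed

theorem mainTheorem8:
  fixes V :: "'v set" and E :: "'v set set" and es :: "'v set list"
  assumes "finite_simple_graph V E"
    and "distinct es" and "set es = E"
    and "\<exists>cs. is_cycle V E cs"
  shows "girth (cover_vertices V es) (cover_edges es) \<ge> 2 * girth V E"
  unfolding girth_def[of "cover_vertices V es"]
  using twice_girth_le_cover_cycle_length[OF assms(1-3)] by (auto intro: INF_greatest)

end
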